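(* Consider an inter-class orthogonal main effect plan on $n$ runs whose factors are partitioned into $k$ classes, the $i$-th class consisting of factors $F_{i,1},\dots,F_{i,m_i}$, with every level of every factor occurring. Fix a class $i$ and $j\in\{1,\dots,m_i\}$. Then: (a) $X_{i,j}'(I-P_{\mathrm{all}\setminus(i,j)})X_{i,j}=X_{i,j}'(I-P^i_{\bar j})X_{i,j}$ and $X_{i,j}'(I-P_{\mathrm{all}\setminus(i,j)})Y=X_{i,j}'(I-P^i_{\bar j})Y$; that is, the reduced normal equation for $\alpha^{ij}$ (after eliminating all other factors and the general mean) coincides with $C^i_{j;\bar j}\widehat{\alpha^{ij}}=Q^i_{j;\bar j}$, where $C^i_{j;\bar j}=X_{i,j}'(I-P^i_{\bar j})X_{i,j}$ and $Q^i_{j;\bar j}=X_{i,j}'(I-P^i_{\bar j})Y$, obtained by eliminating only the other factors of class $i$ and the general mean. (b) $SS_{(i,j);\mathrm{all}}=SS^i_{j;\mathrm{all}}$ and $SS_{(i,j);\mathrm{all}>}=SS^i_{j;\mathrm{all}>}$. (c) $SS_E=SS_{tot}-\sum_{i=1}^kSS^i_{total}$, where $SS^i_{total}=\sum_{j=1}^{m_i}SS^i_{j;\mathrm{all}>}$.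
   Context: Model: $Y=\mathbf 1_n\mu+\sum_{i,j}X_{i,j}\alpha^{ij}+\epsilon$ with uncorrelated homoscedastic errors, where $X_{i,j}$ is the 0-1 design matrix of $F_{i,j}$ ($(u,t)$ entry $1$ iff $F_{i,j}$ is at level $t$ in run $u$). Two factors $A,B$ are orthogonal if $n_{AB}(s,t)=r_A(s)r_B(t)/n$ for all levels $s,t$ (incidence counts and replications); the plan is inter-class orthogonal if any two factors in different classes are orthogonal. $P_M$ denotes the orthogonal projector onto the column space of the matrix $M$. For a set $\mathcal S$ of factors, $P_{\mathcal S}$ is the projector onto the column space of $[\mathbf 1_n, X_F : F\in\mathcal S]$ (the general mean is always included). For a factor $F$ with design matrix $X_F$ not in $\mathcal S$, the sum of squares of $F$ adjusted for $\mathcal S$ is $SS_{F;\mathcal S}=Y'(I-P_{\mathcal S})X_F[X_F'(I-P_{\mathcal S})X_F]^-X_F'(I-P_{\mathcal S})Y$. Notation: $P_{\mathrm{all}\setminus(i,j)}$ uses all factors other than $F_{i,j}$; $P^i_{\bar j}$ uses the factors $F_{i,l}$, $l\neq j$ (of class $i$ only). Order all factors lexicographically: $F_{1,1},\dots,F_{1,m_1},F_{2,1},\dots,F_{k,m_k}$. $SS_{(i,j);\mathrm{all}}$ = SS of $F_{i,j}$ adjusted for all other factors; $SS_{(i,j);\mathrm{all}>}$ = SS of $F_{i,j}$ adjusted for all factors after it in this global order; $SS^i_{j;\mathrm{all}}$ = SS of $F_{i,j}$ adjusted for $F_{i,l}$, $l\neq j$; $SS^i_{j;\mathrm{all}>}$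 = SS of $F_{i,j}$ adjusted for $F_{i,j+1},\dots,F_{i,m_i}$ (for $j=m_i$, adjusted for the general mean only). $SS_{tot}=\sum_uY_u^2-(\sum_uY_u)^2/n$; $SS_E$ is the residual sum of squares of the full model. *)

theory Defs
  imports "HOL-Analysis.Analysis"
begin

text \<open>Runs are indexed by a finite type 'r (so n = CARD('r)); vectors in R^n are real^'r.
  Factor F_{i,j} (class i in 1..k, index j in 1..m i) has s i j levels 0..<s i j;
  lev i j u is the level of F_{i,j} in run u.\<close>

definition ones :: "real^'r::finite" where
  "ones = (\<chi> u. 1)"

text \<open>Column t of the 0-1 design matrix X_{i,j}.\<close>
definition xcol :: "(nat \<Rightarrow> nat \<Rightarrow> 'r::finite \<Rightarrow> nat) \<Rightarrow> nat \<Rightarrow> nat \<Rightarrow> nat \<Rightarrow> real^'r" where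
  "xcol lev i j t = (\<chi> u. if lev i j u = t then 1 else 0)"

definition facs :: "nat \<Rightarrow> (nat \<Rightarrow> nat) \<Rightarrow> (nat \<times> nat) set" where
  "facs k m = {(i, j). 1 \<le> i \<and> i \<le> k \<and> 1 \<le> j \<and> j \<le> m i}"

definition valid_plan :: "nat \<Rightarrow> (nat \<Rightarrow> nat) \<Rightarrow> (nat \<Rightarrow> nat \<Rightarrow> nat) \<Rightarrow> (nat \<Rightarrow> nat \<Rightarrow> 'r::finite \<Rightarrow> nat) \<Rightarrow> bool" where
  "valid_plan k m s lev \<longleftrightarrow>
     (\<forall>(i, j) \<in> facs k m. (\<forall>u. lev i j u < s i j) \<and> (\<forall>t < s i j. \<exists>u. lev i j u = t))"

definition orth_factors :: "(nat \<Rightarrow> nat \<Rightarrow> 'r::finite \<Rightarrow> nat) \<Rightarrow> nat \<times> nat \<Rightarrow> nat \<times> nat \<Rightarrow> bool" where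
  "orth_factors lev A B \<longleftrightarrow>
     (\<forall>a b. real (card {u. lev (fst A) (snd A) u = a \<and> lev (fst B) (snd B) u = b}) =
            real (card {u. lev (fst A) (snd A) u = a}) * real (card {u. lev (fst B) (snd B) u = b})
            / real CARD('r))"

definition inter_class_orthogonal :: "nat \<Rightarrow> (nat \<Rightarrow> nat) \<Rightarrow> (nat \<Rightarrow> nat \<Rightarrow> 'r::finite \<Rightarrow> nat) \<Rightarrow> bool" where
  "inter_class_orthogonal k m lev \<longleftrightarrow>
     (\<forall>A \<in> facs k m. \<forall>B \<in> facs k m. fst A \<noteq> fst B \<longrightarrow> orth_factors lev A B)"

definition colsp :: "(nat \<Rightarrow> nat \<Rightarrow> nat) \<Rightarrow> (nat \<Rightarrow> nat \<Rightarrow> 'r::finite \<Rightarrow> nat) \<Rightarrow> (nat \<times> nat) set \<Rightarrow> (real^'r) set" where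
  "colsp s lev S = span (insert ones (\<Union>(i, j) \<in> S. {xcol lev i j t | t. t < s i j}))"

definition proj :: "(real^'r::finite) set \<Rightarrow> real^'r \<Rightarrow> real^'r" where
  "proj V y = (THE p. p \<in> V \<and> (\<forall>v \<in> V. inner (y - p) v = 0))"

definition Pfac :: "(nat \<Rightarrow> nat \<Rightarrow> nat) \<Rightarrow> (nat \<Rightarrow> nat \<Rightarrow> 'r::finite \<Rightarrow> nat) \<Rightarrow> (nat \<times> nat) set \<Rightarrow> real^'r \<Rightarrow> real^'r" where
  "Pfac s lev S y = proj (colsp s lev S) y"

definition resid :: "(nat \<Rightarrow> nat \<Rightarrow> nat) \<Rightarrow> (nat \<Rightarrow> nat \<Rightarrow> 'r::finite \<Rightarrow> nat) \<Rightarrow> (nat \<times> nat) set \<Rightarrow> real^'r \<Rightarrow> real^'r" where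
  "resid s lev S y = y - Pfac s lev S y"

definition Cmat :: "(nat \<Rightarrow> nat \<Rightarrow> nat) \<Rightarrow> (nat \<Rightarrow> nat \<Rightarrow> 'r::finite \<Rightarrow> nat) \<Rightarrow> (nat \<times> nat) set \<Rightarrow> nat \<times> nat \<Rightarrow> nat \<Rightarrow> nat \<Rightarrow> real" where
  "Cmat s lev S F a b = inner (xcol lev (fst F) (snd F) a) (resid s lev S (xcol lev (fst F) (snd F) b))"

definition Qvec :: "(nat \<Rightarrow> nat \<Rightarrow> nat) \<Rightarrow> (nat \<Rightarrow> nat \<Rightarrow> 'r::finite \<Rightarrow> nat) \<Rightarrow> (nat \<times> nat) set \<Rightarrow> nat \<times> nat \<Rightarrow> real^'r \<Rightarrow> nat \<Rightarrow> real" where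
  "Qvec s lev S F Y a = inner (xcol lev (fst F) (snd F) a) (resid s lev S Y)"

definition is_ginv :: "nat \<Rightarrow> (nat \<Rightarrow> nat \<Rightarrow> real) \<Rightarrow> (nat \<Rightarrow> nat \<Rightarrow> real) \<Rightarrow> bool" where
  "is_ginv d C G \<longleftrightarrow>
     (\<forall>a < d. \<forall>b < d. (\<Sum>c<d. \<Sum>e<d. C a c * G c e * C e b) = C a b)"

definition SSadj :: "(nat \<Rightarrow> nat \<Rightarrow> nat) \<Rightarrow> (nat \<Rightarrow> nat \<Rightarrow> 'r::finite \<Rightarrow> nat) \<Rightarrow> (nat \<times> nat) set \<Rightarrow> nat \<times> nat \<Rightarrow> real^'r \<Rightarrow> real" where
  "SSadj s lev S F Y =
     (let d = s (fst F) (snd F);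
          C = Cmat s lev S F;
          q = Qvec s lev S F Y;
          G = (SOME G. is_ginv d C G)
      in (\<Sum>a<d. \<Sum>b<d. q a * G a b * q b))"

definition all_but :: "nat \<Rightarrow> (nat \<Rightarrow> nat) \<Rightarrow> nat \<Rightarrow> nat \<Rightarrow> (nat \<times> nat) set" where
  "all_but k m i j = facs k m - {(i, j)}"

definition all_after :: "nat \<Rightarrow> (nat \<Rightarrow> nat) \<Rightarrow> nat \<Rightarrow> nat \<Rightarrow> (nat \<times> nat) set" where
  "all_after k m i j = {(i', j') \<in> facs k m. i < i' \<or> (i' = i \<and> j < j')}"

definition class_but :: "(nat \<Rightarrow> nat) \<Rightarrow> nat \<Rightarrow> nat \<Rightarrow> (nat \<times> nat) set" where
  "class_but m i j = {(i, l) | l. 1 \<le> l \<and> l \<le> m i \<and> l \<noteq> j}"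

definition class_after :: "(nat \<Rightarrow> nat) \<Rightarrow> nat \<Rightarrow> nat \<Rightarrow> (nat \<times> nat) set" where
  "class_after m i j = {(i, l) | l. j < l \<and> l \<le> m i}"

definition SS_tot :: "real^'r::finite \<Rightarrow> real" where
  "SS_tot Y = (\<Sum>u\<in>UNIV. (Y $ u)\<^sup>2) - (\<Sum>u\<in>UNIV. Y $ u)\<^sup>2 / real CARD('r)"

definition SS_E :: "nat \<Rightarrow> (nat \<Rightarrow> nat) \<Rightarrow> (nat \<Rightarrow> nat \<Rightarrow> nat) \<Rightarrow> (nat \<Rightarrow> nat \<Rightarrow> 'r::finite \<Rightarrow> nat) \<Rightarrow> real^'r \<Rightarrow> real" where
  "SS_E k m s lev Y = (norm (resid s lev (facs k m) Y))\<^sup>2"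

end

theory Submission
  imports Defs
begin

text \<open>Whatever generalized inverse is chosen, the sum of squares of a factor F adjusted for a set S
  of factors is the squared length of the projection of Y onto the span of the adjusted columns
  (I - P_S) X_F, i.e. it equals \<open>|P_{S \<union> F} Y - P_S Y|\<^sup>2\<close>. Under inter-class orthogonality the
  residual of a column of another class, after adjusting for any set of factors, is just the
  column centred at its mean, and these centred columns are orthogonal to every column of the
  other classes. Hence adjoining factors of other classes adds an orthogonal summand that is
  invisible to X_{i,j}, which gives (a) and (b); telescoping the resulting orthogonal
  decompositions, first over the classes and then within each class, gives (c).\<close>

section \<open>Orthogonal projections\<close>

lemma proj_unique:
  fixes V :: "(real^'r::finite) set"
  assumes V: "subspace V" and p: "p \<in> V" "\<And>v. v \<in> V \<Longrightarrow> inner (y - p) v = 0"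
  shows "proj V y = p"
  unfolding proj_def
proof (rule the_equality)
  show "p \<in> V \<and> (\<forall>v\<in>V. inner (y - p) v = 0)" using p by blast
  fix q assume q: "q \<in> V \<and> (\<forall>v\<in>V. inner (y - q) v = 0)"
  have "q - p \<in> V" using V p q subspace_diff by blast
  then have "inner (q - p) (q - p) = inner (y - p) (q - p) - inner (y - q) (q - p)"
    by (simp add: inner_diff_left)
  also have "\<dots> = 0" using p q \<open>q - p \<in> V\<close> by simp
  finally show "q = p" by simp
qed

lemma proj_exists:
  fixes V :: "(real^'r::finite) set"
  assumes "subspace V"
  shows "\<exists>p\<in>V. \<forall>v\<in>V. inner (y - p) v = 0"
proof -
  obtain a b where "a \<in> span V" "\<And>w. w \<in> span V \<Longrightarrow> orthogonal b w" "y = a + b"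
    using orthogonal_subspace_decomp_exists by blast
  moreover have "span V = V" using assms by simp
  ultimately show ?thesis
    by (intro bexI[of _ a]) (auto simp: orthogonal_def)
qed

lemma proj_in_subspace:
  fixes V :: "(real^'r::finite) set"
  shows "subspace V \<Longrightarrow> proj V y \<in> V"
  using proj_exists proj_unique by metis

lemma proj_orthogonal:
  fixes V :: "(real^'r::finite) set"
  shows "subspace V \<Longrightarrow> v \<in> V \<Longrightarrow> inner (y - proj V y) v = 0"
  using proj_exists proj_unique by metis

lemma proj_UNIV: "proj (UNIV :: (real^'r::finite) set) y = y"
  by (rule proj_unique) auto

lemma proj_eq_0:
  fixes V :: "(real^'r::finite) set"
  assumes "subspace V" "\<And>v. v \<in> V \<Longrightarrow> inner y v = 0"
  shows "proj V y = 0"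
  using assms by (intro proj_unique) (auto simp: subspace_0)

lemma inner_proj_residual:
  fixes V :: "(real^'r::finite) set"
  assumes "subspace V"
  shows "inner (proj V x) (y - proj V y) = 0"
  using proj_orthogonal[OF assms proj_in_subspace[OF assms], of y x] by (simp add: inner_commute)

lemma proj_Pythagorean:
  fixes L U V :: "(real^'r::finite) set"
  assumes L: "subspace L" and U: "subspace U" and V: "subspace V" and "L \<subseteq> U" "U \<subseteq> V"
  shows "(norm (proj V y - proj L y))\<^sup>2 = (norm (proj V y - proj U y))\<^sup>2 + (norm (proj U y - proj L y))\<^sup>2"
proof -
  have inU: "proj U y - proj L y \<in> U"
    using assms proj_in_subspace subspace_diff by blast
  have "inner (proj V y - proj U y) (proj U y - proj L y)
      = inner (y - proj U y) (proj U y - proj L y) - inner (y - proj V y) (proj U y - proj L y)"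
    by (simp add: inner_diff_left)
  also have "\<dots> = 0" using inU assms by (auto simp: proj_orthogonal)
  finally have "orthogonal (proj V y - proj U y) (proj U y - proj L y)"
    by (simp add: orthogonal_def)
  then show ?thesis using norm_add_Pythagorean by fastforce
qed

lemma norm_proj_diff_telescope:
  fixes V :: "nat \<Rightarrow> (real^'r::finite) set"
  assumes V: "\<And>n. subspace (V n)" and dec: "\<And>n. V (Suc n) \<subseteq> V n"
  shows "(norm (proj (V 0) y - proj (V N) y))\<^sup>2 = (\<Sum>n<N. (norm (proj (V n) y - proj (V (Suc n)) y))\<^sup>2)"
proof (induction N)
  case (Suc N)
  have "(norm (proj (V 0) y - proj (V (Suc N)) y))\<^sup>2
      = (norm (proj (V 0) y - proj (V N) y))\<^sup>2 + (norm (proj (V N) y - proj (V (Suc N)) y))\<^sup>2"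
    using lift_Suc_antimono_le[of V, OF dec] by (intro proj_Pythagorean V dec) auto
  then show ?case using Suc by simp
qed simp

lemma proj_span_Un:
  fixes U X :: "(real^'r::finite) set"
  assumes U: "subspace U"
  shows "proj (span (U \<union> X)) y = proj U y + proj (span ((\<lambda>x. x - proj U x) ` X)) y"
proof (rule proj_unique)
  define W where "W = span ((\<lambda>x. x - proj U x) ` X)"
  have sW: "subspace W" by (simp add: W_def)
  have WU: "inner w u = 0" if "w \<in> W" "u \<in> U" for w u
  proof -
    have "inner u (x - proj U x) = 0" for x
      using proj_orthogonal[OF U \<open>u \<in> U\<close>] by (simp add: inner_commute)
    then have "orthogonal u w"
      using that unfolding W_def by (intro orthogonal_to_span[of w]) (auto simp: orthogonal_def)
    then show ?thesis by (simp add: orthogonal_def inner_commute)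
  qed
  have "x - proj U x \<in> span (U \<union> X)" if "x \<in> X" for x
    using that proj_in_subspace[OF U] span_superset by (blast intro: span_diff)
  then have WV: "W \<subseteq> span (U \<union> X)"
    unfolding W_def by (intro span_minimal) auto
  show "subspace (span (U \<union> X))" by simp
  show "proj U y + proj W y \<in> span (U \<union> X)"
    by (intro span_add) (use WV proj_in_subspace[OF U] proj_in_subspace[OF sW] span_superset in blast)+
  fix v assume v: "v \<in> span (U \<union> X)"
  let ?r = "y - (proj U y + proj W y)"
  have "orthogonal ?r g" if "g \<in> U \<union> X" for g
  proof (cases "g \<in> U")
    case True
    then have "inner ?r g = inner (y - proj U y) g - inner (proj W y) g"
      by (simp add: algebra_simps)
    then show ?thesis using True U sW by (simp add: orthogonal_def proj_orthogonal WU proj_in_subspace)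
  next
    case False
    then have g: "g - proj U g \<in> W" using that unfolding W_def by (auto intro: span_base)
    have "inner ?r g = inner (y - proj W y) (g - proj U g) - inner (proj U y) (g - proj U g)
        + inner (y - proj U y) (proj U g) - inner (proj W y) (proj U g)"
      by (simp add: algebra_simps inner_diff_right)
    also have "\<dots> = 0"
    proof -
      have "inner (proj U y) (g - proj U g) = 0" "inner (proj W y) (proj U g) = 0"
        using WU[OF g] WU[OF proj_in_subspace[OF sW]] proj_in_subspace[OF U]
        by (auto simp: inner_commute)
      then show ?thesis
        using proj_orthogonal[OF sW g] proj_orthogonal[OF U proj_in_subspace[OF U]] by simp
    qed
    finally show ?thesis by (simp add: orthogonal_def)
  qed
  then have "orthogonal ?r v" by (rule orthogonal_to_span[OF v])
  then show "inner ?r v = 0" by (simp add: orthogonal_def)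
qed

section \<open>Generalized inverses of Gram matrices\<close>

lemma span_image_lessThanE:
  fixes z :: "nat \<Rightarrow> 'a::real_vector"
  assumes "v \<in> span (z ` {..<d})"
  obtains \<beta> where "v = (\<Sum>c<d. \<beta> c *\<^sub>R z c)"
proof -
  have "\<exists>\<beta>. v = (\<Sum>c<d. \<beta> c *\<^sub>R z c)"
    using assms
  proof (induction rule: span_induct_alt)
    case base
    show ?case by (intro exI[of _ "\<lambda>_. 0"]) simp
  next
    case (step r x y)
    then obtain a \<beta> where "a < d" "x = z a" "y = (\<Sum>c<d. \<beta> c *\<^sub>R z c)" by blast
    then have "r *\<^sub>R x + y = (\<Sum>c<d. (\<beta> c + (if c = a then r else 0)) *\<^sub>R z c)"
      by (simp add: scaleR_add_left sum.distrib if_distrib[of "\<lambda>t. t *\<^sub>R z _"] cong: if_cong)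
    then show ?case by (rule exI[of _ "\<lambda>c. \<beta> c + (if c = a then r else 0)"])
  qed
  then show thesis using that by blast
qed

lemma ginv_quadratic_form:
  fixes K G :: "nat \<Rightarrow> nat \<Rightarrow> real"
  assumes sym: "\<And>a b. K a b = K b a" and G: "is_ginv d K G"
  shows "(\<Sum>a<d. \<Sum>b<d. (\<Sum>c<d. K a c * \<beta> c) * G a b * (\<Sum>e<d. K b e * \<beta> e))
       = (\<Sum>c<d. \<Sum>e<d. \<beta> c * K c e * \<beta> e)"
proof -
  define v where "v a = (\<Sum>c<d. K a c * \<beta> c)" for a
  have row: "(\<Sum>a<d. \<Sum>b<d. v a * G a b * K b e) = (\<Sum>c<d. \<beta> c * K c e)" if "e < d" for e
  proof -
    have expand: "v a * G a b * K b e = (\<Sum>c<d. \<beta> c * (K c a * G a b * K b e))" for a b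
      unfolding v_def sum_distrib_right by (rule sum.cong) (auto simp: sym[of a])
    have "(\<Sum>a<d. \<Sum>b<d. v a * G a b * K b e) = (\<Sum>a<d. \<Sum>b<d. \<Sum>c<d. \<beta> c * (K c a * G a b * K b e))"
      by (simp only: expand)
    also have "\<dots> = (\<Sum>a<d. \<Sum>c<d. \<Sum>b<d. \<beta> c * (K c a * G a b * K b e))"
      by (rule sum.cong[OF refl], rule sum.swap)
    also have "\<dots> = (\<Sum>c<d. \<beta> c * (\<Sum>a<d. \<Sum>b<d. K c a * G a b * K b e))"
      by (subst sum.swap) (simp only: sum_distrib_left)
    also have "\<dots> = (\<Sum>c<d. \<beta> c * K c e)"
      using G that by (simp add: is_ginv_def)
    finally show ?thesis .
  qed
  have "(\<Sum>a<d. \<Sum>b<d. v a * G a b * (\<Sum>e<d. K b e * \<beta> e))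
      = (\<Sum>a<d. \<Sum>b<d. \<Sum>e<d. v a * G a b * K b e * \<beta> e)"
    by (simp only: sum_distrib_left mult.assoc)
  also have "\<dots> = (\<Sum>e<d. (\<Sum>a<d. \<Sum>b<d. v a * G a b * K b e) * \<beta> e)"
    by (simp only: sum_distrib_right) (subst sum.swap, rule sum.cong[OF refl], rule sum.swap)
  also have "\<dots> = (\<Sum>e<d. \<Sum>c<d. \<beta> c * K c e * \<beta> e)"
    by (rule sum.cong[OF refl]) (simp only: lessThan_iff row sum_distrib_right)
  also have "\<dots> = (\<Sum>c<d. \<Sum>e<d. \<beta> c * K c e * \<beta> e)"
    by (rule sum.swap)
  finally show ?thesis by (simp only: v_def)
qed

lemma gram_ginv_exists:
  fixes z :: "nat \<Rightarrow> 'a::euclidean_space"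
  shows "\<exists>G. is_ginv d (\<lambda>a b. inner (z a) (z b)) G"
proof -
  obtain B where B: "B \<subseteq> span (z ` {..<d})" "pairwise orthogonal B" "\<And>e. e \<in> B \<Longrightarrow> norm e = 1"
    "independent B" "card B = dim (span (z ` {..<d}))" "span B = span (z ` {..<d})"
    by (rule orthonormal_basis_subspace[of "span (z ` {..<d})", OF subspace_span]) blast
  have "\<forall>e\<in>B. \<exists>\<beta>. e = (\<Sum>c<d. \<beta> c *\<^sub>R z c)"
    using B(1) span_image_lessThanE by (metis subsetD)
  then obtain \<beta> where \<beta>: "\<And>e. e \<in> B \<Longrightarrow> e = (\<Sum>c<d. \<beta> e c *\<^sub>R z c)"
    by (metis bchoice)
  define G where "G c f = (\<Sum>e\<in>B. \<beta> e c * \<beta> e f)" for c f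
  have coord: "(\<Sum>c<d. \<beta> e c * inner (z c) x) = inner e x" if "e \<in> B" for e x
    by (subst (2) \<beta>[OF that]) (simp add: inner_sum_left)
  have "is_ginv d (\<lambda>a b. inner (z a) (z b)) G"
    unfolding is_ginv_def
  proof (intro allI impI)
    fix a b assume "b < d"
    have "(\<Sum>c<d. \<Sum>f<d. inner (z a) (z c) * G c f * inner (z f) (z b))
        = (\<Sum>c<d. \<Sum>f<d. \<Sum>e\<in>B. (\<beta> e c * inner (z c) (z a)) * (\<beta> e f * inner (z f) (z b)))"
      by (simp add: G_def sum_distrib_left sum_distrib_right inner_commute mult_ac)
    also have "\<dots> = (\<Sum>e\<in>B. \<Sum>c<d. \<Sum>f<d. (\<beta> e c * inner (z c) (z a)) * (\<beta> e f * inner (z f) (z b)))"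
      by (subst sum.swap, rule sum.cong[OF refl], rule sum.swap)
    also have "\<dots> = (\<Sum>e\<in>B. inner e (z a) * inner e (z b))"
      by (simp only: sum_product[symmetric] coord cong: sum.cong)
    also have "\<dots> = inner (z a) (z b)"
    proof -
      have "(\<Sum>e\<in>B. inner (z b) e *\<^sub>R e) = z b"
        using B \<open>b < d\<close>
        by (intro orthonormal_basis_expand) (auto simp: span_base independent_imp_finite)
      then have "inner (z a) (z b) = (\<Sum>e\<in>B. inner (z a) (inner (z b) e *\<^sub>R e))"
        by (simp only: inner_sum_right[symmetric])
      then show ?thesis by (simp add: inner_commute mult.commute)
    qed
    finally show "(\<Sum>c<d. \<Sum>f<d. inner (z a) (z c) * G c f * inner (z f) (z b)) = inner (z a) (z b)" .
  qed
  then show ?thesis by (rule exI[of _ G])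
qed

lemma ginv_quadratic_form_eq_norm_proj:
  fixes z :: "nat \<Rightarrow> real^'r::finite"
  assumes G: "is_ginv d (\<lambda>a b. inner (z a) (z b)) G"
  shows "(\<Sum>a<d. \<Sum>b<d. inner (z a) y * G a b * inner (z b) y) = (norm (proj (span (z ` {..<d})) y))\<^sup>2"
proof -
  define p where "p = proj (span (z ` {..<d})) y"
  obtain \<beta> where \<beta>: "p = (\<Sum>c<d. \<beta> c *\<^sub>R z c)"
    using span_image_lessThanE proj_in_subspace[OF subspace_span] unfolding p_def by blast
  have "inner (z a) y = (\<Sum>c<d. inner (z a) (z c) * \<beta> c)" if "a < d" for a
  proof -
    have "inner (y - p) (z a) = 0"
      unfolding p_def using that by (intro proj_orthogonal) (auto intro: span_base)
    then have "inner (z a) y = inner (z a) p"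
      using inner_diff_right[of "z a" y p] inner_commute[of "y - p" "z a"] by simp
    then show ?thesis by (simp add: \<beta> inner_sum_right mult.commute)
  qed
  then have "(\<Sum>a<d. \<Sum>b<d. inner (z a) y * G a b * inner (z b) y)
      = (\<Sum>a<d. \<Sum>b<d. (\<Sum>c<d. inner (z a) (z c) * \<beta> c) * G a b * (\<Sum>e<d. inner (z b) (z e) * \<beta> e))"
    by simp
  also have "\<dots> = (\<Sum>c<d. \<Sum>e<d. \<beta> c * inner (z c) (z e) * \<beta> e)"
    by (rule ginv_quadratic_form[OF inner_commute G])
  also have "\<dots> = (\<Sum>c<d. \<beta> c * inner (z c) p)"
    by (simp add: \<beta> inner_sum_right sum_distrib_left mult_ac)
  also have "\<dots> = inner p p"
    by (subst (2) \<beta>) (simp add: inner_sum_left)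
  finally show ?thesis by (simp add: p_def power2_norm_eq_inner)
qed

section \<open>Adjusted sums of squares as lengths of projections\<close>

definition factor_cols :: "(nat \<Rightarrow> nat \<Rightarrow> nat) \<Rightarrow> (nat \<Rightarrow> nat \<Rightarrow> 'r::finite \<Rightarrow> nat) \<Rightarrow> (nat \<times> nat) set \<Rightarrow> (real^'r) set" where
  "factor_cols s lev S = (\<Union>(i, j)\<in>S. {xcol lev i j t | t. t < s i j})"

lemma colsp_eq_span_factor_cols: "colsp s lev S = span (insert ones (factor_cols s lev S))"
  by (simp add: colsp_def factor_cols_def)

lemma subspace_colsp: "subspace (colsp s lev S)"
  by (simp add: colsp_def)

lemma colsp_mono: "S \<subseteq> S' \<Longrightarrow> colsp s lev S \<subseteq> colsp s lev S'"
  unfolding colsp_def by (intro span_mono) blast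

lemma colsp_Un: "colsp s lev (T \<union> R) = span (colsp s lev T \<union> factor_cols s lev R)"
proof -
  have "insert ones (factor_cols s lev (T \<union> R)) = insert ones (factor_cols s lev T) \<union> factor_cols s lev R"
    by (auto simp: factor_cols_def)
  then show ?thesis
    unfolding colsp_eq_span_factor_cols by (simp only: span_Un span_span)
qed

lemma factor_cols_singleton: "factor_cols s lev {(i, j)} = xcol lev i j ` {..<s i j}"
  by (auto simp: factor_cols_def)

lemma SSadj_eq_norm_Pfac_diff:
  fixes lev :: "nat \<Rightarrow> nat \<Rightarrow> 'r::finite \<Rightarrow> nat"
  shows "SSadj s lev S (i, j) Y = (norm (Pfac s lev (S \<union> {(i, j)}) Y - Pfac s lev S Y))\<^sup>2"
proof -
  define U where "U = colsp s lev S"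
  define z where "z a = xcol lev i j a - proj U (xcol lev i j a)" for a
  have U: "subspace U" by (simp add: U_def subspace_colsp)
  have C: "Cmat s lev S (i, j) = (\<lambda>a b. inner (z a) (z b))"
    by (intro ext) (simp add: Cmat_def resid_def Pfac_def U_def[symmetric] z_def inner_diff_left
        inner_proj_residual[OF U])
  have Q: "Qvec s lev S (i, j) Y = (\<lambda>a. inner (z a) Y)"
  proof
    fix a
    have "inner (z a) (proj U Y) = 0"
      unfolding z_def by (rule proj_orthogonal[OF U proj_in_subspace[OF U]])
    then have "inner (z a) Y = inner (z a) (Y - proj U Y)" by (simp add: inner_diff_right)
    also have "\<dots> = inner (xcol lev i j a) (Y - proj U Y)"
      by (simp add: z_def inner_diff_left inner_proj_residual[OF U])
    finally show "Qvec s lev S (i, j) Y a = inner (z a) Y"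
      by (simp add: Qvec_def resid_def Pfac_def U_def)
  qed
  have "is_ginv (s i j) (\<lambda>a b. inner (z a) (z b)) (SOME G. is_ginv (s i j) (\<lambda>a b. inner (z a) (z b)) G)"
    by (rule someI_ex[OF gram_ginv_exists])
  then have "SSadj s lev S (i, j) Y = (norm (proj (span (z ` {..<s i j})) Y))\<^sup>2"
    unfolding SSadj_def Let_def C Q by (simp add: ginv_quadratic_form_eq_norm_proj)
  also have "proj (span (z ` {..<s i j})) Y = Pfac s lev (S \<union> {(i, j)}) Y - Pfac s lev S Y"
  proof -
    have "colsp s lev (S \<union> {(i, j)}) = span (U \<union> xcol lev i j ` {..<s i j})"
      by (simp only: colsp_Un factor_cols_singleton U_def)
    then show ?thesis
      using proj_span_Un[OF U, of "xcol lev i j ` {..<s i j}" Y] by (simp add: Pfac_def U_def image_image z_def)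
  qed
  finally show ?thesis .
qed

section \<open>Centred columns and inter-class orthogonality\<close>

lemma inner_xcol_xcol:
  "inner (xcol lev i j a) (xcol lev i' j' b) = real (card {u. lev i j u = a \<and> lev i' j' u = b})"
proof -
  have "inner (xcol lev i j a) (xcol lev i' j' b) = (\<Sum>u\<in>UNIV. of_bool (lev i j u = a \<and> lev i' j' u = b))"
    unfolding inner_vec_def xcol_def by (intro sum.cong) auto
  then show ?thesis by simp
qed

lemma inner_xcol_ones: "inner (xcol lev i j a) (ones :: real^'r::finite) = real (card {u. lev i j u = a})"
proof -
  have "inner (xcol lev i j a) (ones :: real^'r) = (\<Sum>u\<in>UNIV. of_bool (lev i j u = a))"
    unfolding inner_vec_def xcol_def ones_def by (intro sum.cong) auto
  then show ?thesis by simp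
qed

lemma inner_ones_ones: "inner (ones :: real^'r::finite) ones = real CARD('r)"
  by (simp add: inner_vec_def ones_def)

definition centred_xcol :: "(nat \<Rightarrow> nat \<Rightarrow> 'r::finite \<Rightarrow> nat) \<Rightarrow> nat \<Rightarrow> nat \<Rightarrow> nat \<Rightarrow> real^'r" where
  "centred_xcol lev i j t = xcol lev i j t - (real (card {u. lev i j u = t}) / real CARD('r)) *\<^sub>R ones"

lemma inner_ones_centred_xcol: "inner ones (centred_xcol lev i j t) = 0"
  unfolding centred_xcol_def inner_diff_right inner_scaleR_right inner_ones_ones
  by (simp add: inner_commute[of ones] inner_xcol_ones)

lemma inner_xcol_centred_xcol:
  assumes "orth_factors lev (i, j) (i', j')"
  shows "inner (xcol lev i j a) (centred_xcol lev i' j' t) = 0"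
  using assms
  unfolding centred_xcol_def inner_diff_right inner_scaleR_right inner_xcol_xcol inner_xcol_ones orth_factors_def
  by simp

lemma resid_xcol_orthogonal:
  fixes lev :: "nat \<Rightarrow> nat \<Rightarrow> 'r::finite \<Rightarrow> nat"
  assumes orth: "\<forall>A\<in>T. orth_factors lev A (i, j)"
  shows "resid s lev T (xcol lev i j t) = centred_xcol lev i j t"
proof -
  let ?c = "real (card {u. lev i j u = t}) / real CARD('r)"
  have "Pfac s lev T (xcol lev i j t) = ?c *\<^sub>R ones"
    unfolding Pfac_def
  proof (rule proj_unique[OF subspace_colsp])
    show "?c *\<^sub>R ones \<in> colsp s lev T"
      unfolding colsp_def by (intro span_mul span_base) simp
    fix v assume v: "v \<in> colsp s lev T"
    have "orthogonal (centred_xcol lev i j t) g" if "g \<in> insert ones (factor_cols s lev T)" for g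
      using that orth inner_ones_centred_xcol
      by (auto simp: factor_cols_def orthogonal_def inner_commute intro!: inner_xcol_centred_xcol)
    then have "orthogonal (centred_xcol lev i j t) v"
      using v unfolding colsp_eq_span_factor_cols by (rule orthogonal_to_span[rotated])
    then show "inner (xcol lev i j t - ?c *\<^sub>R ones) v = 0"
      by (simp add: orthogonal_def centred_xcol_def)
  qed
  then show ?thesis by (simp add: resid_def centred_xcol_def)
qed

definition centred_colsp :: "(nat \<Rightarrow> nat \<Rightarrow> nat) \<Rightarrow> (nat \<Rightarrow> nat \<Rightarrow> 'r::finite \<Rightarrow> nat) \<Rightarrow> (nat \<times> nat) set \<Rightarrow> (real^'r) set" where
  "centred_colsp s lev R = span {centred_xcol lev i j t | i j t. (i, j) \<in> R \<and> t < s i j}"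

lemma Pfac_Un_orthogonal:
  assumes orth: "\<forall>A\<in>T. \<forall>B\<in>R. orth_factors lev A B"
  shows "Pfac s lev (T \<union> R) y = Pfac s lev T y + proj (centred_colsp s lev R) y"
proof -
  have resid: "resid s lev T (xcol lev i j t) = centred_xcol lev i j t" if "(i, j) \<in> R" for i j t
    using orth that by (intro resid_xcol_orthogonal) blast
  have "resid s lev T ` factor_cols s lev R = {centred_xcol lev i j t | i j t. (i, j) \<in> R \<and> t < s i j}"
  proof (intro equalityI subsetI)
    fix x assume "x \<in> resid s lev T ` factor_cols s lev R"
    then obtain i j t where "(i, j) \<in> R" "t < s i j" "x = resid s lev T (xcol lev i j t)"
      by (auto simp: factor_cols_def)
    then show "x \<in> {centred_xcol lev i j t | i j t. (i, j) \<in> R \<and> t < s i j}"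
      using resid by blast
  next
    fix x assume "x \<in> {centred_xcol lev i j t | i j t. (i, j) \<in> R \<and> t < s i j}"
    then obtain i j t where ijt: "(i, j) \<in> R" "t < s i j" "x = centred_xcol lev i j t" by blast
    then have "xcol lev i j t \<in> factor_cols s lev R" by (auto simp: factor_cols_def)
    then show "x \<in> resid s lev T ` factor_cols s lev R"
      using resid[OF ijt(1)] ijt(3) by (metis image_eqI)
  qed
  then show ?thesis
    using proj_span_Un[OF subspace_colsp, of s lev T "factor_cols s lev R" y]
    by (simp add: Pfac_def resid_def colsp_Un centred_colsp_def)
qed

lemma inner_xcol_centred_colsp:
  assumes "\<forall>B\<in>R. orth_factors lev (i, j) B" and "w \<in> centred_colsp s lev R"
  shows "inner (xcol lev i j a) w = 0"
proof -
  have "orthogonal (xcol lev i j a) w"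
    using assms(2) unfolding centred_colsp_def
    by (rule orthogonal_to_span) (use assms(1) in \<open>auto simp: orthogonal_def intro!: inner_xcol_centred_xcol\<close>)
  then show ?thesis by (simp add: orthogonal_def)
qed

lemma adjust_Un_orthogonal:
  assumes orth: "\<forall>A\<in>T. \<forall>B\<in>R. orth_factors lev A B" and orth_ij: "\<forall>B\<in>R. orth_factors lev (i, j) B"
  shows "Cmat s lev (T \<union> R) (i, j) = Cmat s lev T (i, j)"
    and "Qvec s lev (T \<union> R) (i, j) Y = Qvec s lev T (i, j) Y"
    and "SSadj s lev (T \<union> R) (i, j) Y = SSadj s lev T (i, j) Y"
proof -
  let ?W = "centred_colsp s lev R"
  have W: "subspace ?W" by (simp add: centred_colsp_def)
  have resid: "resid s lev (T \<union> R) y = resid s lev T y - proj ?W y" for y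
    by (simp add: resid_def Pfac_Un_orthogonal[OF orth])
  have xcol_perp: "inner (xcol lev i j a) w = 0" if "w \<in> ?W" for a w
    using inner_xcol_centred_colsp[OF orth_ij that] .
  show C: "Cmat s lev (T \<union> R) (i, j) = Cmat s lev T (i, j)"
    using proj_eq_0[OF W xcol_perp] by (intro ext) (simp add: Cmat_def resid)
  show Q: "Qvec s lev (T \<union> R) (i, j) Y = Qvec s lev T (i, j) Y"
    using xcol_perp[OF proj_in_subspace[OF W]] by (intro ext) (simp add: Qvec_def resid inner_diff_right)
  show "SSadj s lev (T \<union> R) (i, j) Y = SSadj s lev T (i, j) Y"
    unfolding SSadj_def C Q ..
qed

lemma inter_class_orthogonalD:
  "inter_class_orthogonal k m lev \<Longrightarrow> A \<in> facs k m \<Longrightarrow> B \<in> facs k m \<Longrightarrow> fst A \<noteq> fst B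
    \<Longrightarrow> orth_factors lev A B"
  unfolding inter_class_orthogonal_def by blast

lemma adjust_other_classes:
  assumes orth: "inter_class_orthogonal k m lev" and ij: "(i, j) \<in> facs k m"
    and T: "T \<subseteq> facs k m" "\<forall>A\<in>T. fst A = i" and R: "R \<subseteq> facs k m" "\<forall>B\<in>R. fst B \<noteq> i"
  shows "Cmat s lev (T \<union> R) (i, j) = Cmat s lev T (i, j)"
    and "Qvec s lev (T \<union> R) (i, j) Y = Qvec s lev T (i, j) Y"
    and "SSadj s lev (T \<union> R) (i, j) Y = SSadj s lev T (i, j) Y"
proof -
  have "\<forall>A\<in>T. \<forall>B\<in>R. orth_factors lev A B" "\<forall>B\<in>R. orth_factors lev (i, j) B"
    using inter_class_orthogonalD[OF orth] ij T R by fastforce+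
  then show "Cmat s lev (T \<union> R) (i, j) = Cmat s lev T (i, j)"
    and "Qvec s lev (T \<union> R) (i, j) Y = Qvec s lev T (i, j) Y"
    and "SSadj s lev (T \<union> R) (i, j) Y = SSadj s lev T (i, j) Y"
    by (rule adjust_Un_orthogonal)+
qed

section \<open>Decomposition of the total sum of squares\<close>

lemma Pfac_empty:
  fixes Y :: "real^'r::finite"
  shows "Pfac s lev {} Y = ((\<Sum>u\<in>UNIV. Y $ u) / real CARD('r)) *\<^sub>R ones"
  unfolding Pfac_def
proof (rule proj_unique[OF subspace_colsp])
  let ?c = "(\<Sum>u\<in>UNIV. Y $ u) / real CARD('r)"
  show "?c *\<^sub>R ones \<in> colsp s lev {}"
    unfolding colsp_def by (intro span_mul span_base) simp
  fix v assume "v \<in> colsp s lev {}"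
  then obtain r where v: "v = r *\<^sub>R ones" by (auto simp: colsp_def span_singleton)
  have "inner Y ones = (\<Sum>u\<in>UNIV. Y $ u)" by (simp add: inner_vec_def ones_def)
  then show "inner (Y - ?c *\<^sub>R ones) v = 0" by (simp add: v inner_diff_left inner_ones_ones)
qed

lemma SS_tot_eq_norm_resid_empty:
  fixes Y :: "real^'r::finite"
  shows "SS_tot Y = (norm (Y - Pfac s lev {} Y))\<^sup>2"
proof -
  define c where "c = (\<Sum>u\<in>UNIV. Y $ u) / real CARD('r)"
  have "(norm (Y - Pfac s lev {} Y))\<^sup>2 = (\<Sum>u\<in>UNIV. (Y $ u - c)\<^sup>2)"
    unfolding power2_norm_eq_inner
    by (simp add: Pfac_empty c_def[symmetric] inner_vec_def ones_def power2_eq_square)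
  also have "\<dots> = (\<Sum>u\<in>UNIV. (Y $ u)\<^sup>2) - 2 * c * (\<Sum>u\<in>UNIV. Y $ u) + real CARD('r) * c\<^sup>2"
    by (simp add: power2_diff sum.distrib sum_subtractf sum_distrib_left mult_ac)
  also have "\<dots> = SS_tot Y"
    by (simp add: SS_tot_def c_def field_simps power2_eq_square)
  finally show ?thesis ..
qed

lemma SS_tot_eq_SS_E_plus:
  "SS_tot Y = SS_E k m s lev Y + (norm (Pfac s lev (facs k m) Y - Pfac s lev {} Y))\<^sup>2"
proof -
  have "(norm (proj UNIV Y - Pfac s lev {} Y))\<^sup>2
      = (norm (proj UNIV Y - Pfac s lev (facs k m) Y))\<^sup>2 + (norm (Pfac s lev (facs k m) Y - Pfac s lev {} Y))\<^sup>2"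
    unfolding Pfac_def by (rule proj_Pythagorean[OF subspace_colsp subspace_colsp subspace_UNIV colsp_mono]) auto
  then show ?thesis using SS_tot_eq_norm_resid_empty[of Y s lev] by (simp add: SS_E_def resid_def proj_UNIV)
qed

lemma sum_SSadj_class_after:
  "(\<Sum>j=1..m c. SSadj s lev (class_after m c j) (c, j) Y)
     = (norm (Pfac s lev (class_after m c 0) Y - Pfac s lev {} Y))\<^sup>2"
proof -
  define V where "V n = colsp s lev (class_after m c n)" for n
  have step: "SSadj s lev (class_after m c (Suc n)) (c, Suc n) Y = (norm (proj (V n) Y - proj (V (Suc n)) Y))\<^sup>2"
    if "n < m c" for n
  proof -
    have "class_after m c (Suc n) \<union> {(c, Suc n)} = class_after m c n"
      using that by (auto simp: class_after_def)
    then show ?thesis by (simp add: SSadj_eq_norm_Pfac_diff V_def Pfac_def)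
  qed
  have "class_after m c (m c) = {}" by (auto simp: class_after_def)
  then have "(norm (Pfac s lev (class_after m c 0) Y - Pfac s lev {} Y))\<^sup>2
      = (norm (proj (V 0) Y - proj (V (m c)) Y))\<^sup>2"
    by (simp add: V_def Pfac_def)
  also have "\<dots> = (\<Sum>n<m c. (norm (proj (V n) Y - proj (V (Suc n)) Y))\<^sup>2)"
    by (rule norm_proj_diff_telescope) (auto simp: V_def subspace_colsp class_after_def intro!: colsp_mono)
  also have "\<dots> = (\<Sum>n<m c. SSadj s lev (class_after m c (Suc n)) (c, Suc n) Y)"
    using step by (intro sum.cong) simp_all
  also have "\<dots> = (\<Sum>j=1..m c. SSadj s lev (class_after m c j) (c, j) Y)"
    by (simp add: sum.atLeast1_atMost_eq)
  finally show ?thesis ..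
qed

lemma norm_Pfac_facs_sum_classes:
  assumes orth: "inter_class_orthogonal k m lev"
  shows "(norm (Pfac s lev (facs k m) Y - Pfac s lev {} Y))\<^sup>2
       = (\<Sum>c=1..k. (norm (Pfac s lev (class_after m c 0) Y - Pfac s lev {} Y))\<^sup>2)"
proof -
  define L where "L n = {B \<in> facs k m. n < fst B}" for n
  define V where "V n = colsp s lev (L n)" for n
  have step: "proj (V n) Y - proj (V (Suc n)) Y = Pfac s lev (class_after m (Suc n) 0) Y - Pfac s lev {} Y"
    if "n < k" for n
  proof -
    let ?C = "class_after m (Suc n) 0"
    have L: "L n = L (Suc n) \<union> ?C"
      using that by (auto simp: L_def facs_def class_after_def intro: Suc_lessI)
    have "?C \<subseteq> facs k m" using that by (auto simp: facs_def class_after_def)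
    then have "\<forall>A\<in>L (Suc n). \<forall>B\<in>?C. orth_factors lev A B"
      by (auto simp: L_def class_after_def intro!: inter_class_orthogonalD[OF orth])
    then have "proj (V n) Y = proj (V (Suc n)) Y + proj (centred_colsp s lev ?C) Y"
      unfolding V_def L by (simp add: Pfac_Un_orthogonal flip: Pfac_def)
    moreover have "Pfac s lev ({} \<union> ?C) Y = Pfac s lev {} Y + proj (centred_colsp s lev ?C) Y"
      by (rule Pfac_Un_orthogonal) simp
    ultimately show ?thesis by simp
  qed
  have "L 0 = facs k m" "L k = {}" by (auto simp: L_def facs_def)
  then have "(norm (Pfac s lev (facs k m) Y - Pfac s lev {} Y))\<^sup>2 = (norm (proj (V 0) Y - proj (V k) Y))\<^sup>2"
    by (simp add: V_def Pfac_def)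
  also have "\<dots> = (\<Sum>n<k. (norm (proj (V n) Y - proj (V (Suc n)) Y))\<^sup>2)"
    by (rule norm_proj_diff_telescope) (auto simp: V_def L_def subspace_colsp intro!: colsp_mono)
  also have "\<dots> = (\<Sum>n<k. (norm (Pfac s lev (class_after m (Suc n) 0) Y - Pfac s lev {} Y))\<^sup>2)"
    using step by (intro sum.cong) simp_all
  also have "\<dots> = (\<Sum>c=1..k. (norm (Pfac s lev (class_after m c 0) Y - Pfac s lev {} Y))\<^sup>2)"
    by (simp add: sum.atLeast1_atMost_eq)
  finally show ?thesis .
qed

lemma SS_E_eq_SS_tot_minus_class_totals:
  assumes "inter_class_orthogonal k m lev"
  shows "SS_E k m s lev Y = SS_tot Y - (\<Sum>i=1..k. \<Sum>j=1..m i. SSadj s lev (class_after m i j) (i, j) Y)"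
proof -
  have "(\<Sum>i=1..k. \<Sum>j=1..m i. SSadj s lev (class_after m i j) (i, j) Y)
      = (norm (Pfac s lev (facs k m) Y - Pfac s lev {} Y))\<^sup>2"
    by (simp only: sum_SSadj_class_after norm_Pfac_facs_sum_classes[OF assms])
  then show ?thesis using SS_tot_eq_SS_E_plus[of Y k m s lev] by simp
qed

theorem theorem4p6:
  fixes k :: nat and m :: "nat \<Rightarrow> nat" and s :: "nat \<Rightarrow> nat \<Rightarrow> nat"
    and lev :: "nat \<Rightarrow> nat \<Rightarrow> 'r::finite \<Rightarrow> nat"
    and Y :: "real^'r" and i j :: nat
  assumes plan: "valid_plan k m s lev"
    and orth: "inter_class_orthogonal k m lev"
    and ij: "(i, j) \<in> facs k m"
  shows "(\<forall>a < s i j. \<forall>b < s i j.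
            Cmat s lev (all_but k m i j) (i, j) a b = Cmat s lev (class_but m i j) (i, j) a b)
       \<and> (\<forall>a < s i j. Qvec s lev (all_but k m i j) (i, j) Y a = Qvec s lev (class_but m i j) (i, j) Y a)
       \<and> SSadj s lev (all_but k m i j) (i, j) Y = SSadj s lev (class_but m i j) (i, j) Y
       \<and> SSadj s lev (all_after k m i j) (i, j) Y = SSadj s lev (class_after m i j) (i, j) Y
       \<and> SS_E k m s lev Y = SS_tot Y - (\<Sum>i'=1..k. \<Sum>j'=1..m i'. SSadj s lev (class_after m i' j') (i', j') Y)"
proof -
  have i: "1 \<le> i" "i \<le> k" "j \<le> m i" using ij by (auto simp: facs_def)
  have all_but: "all_but k m i j = class_but m i j \<union> {B \<in> facs k m. fst B \<noteq> i}"
    using i by (auto simp: all_but_def class_but_def facs_def)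
  have all_after: "all_after k m i j = class_after m i j \<union> {B \<in> facs k m. i < fst B}"
    using i by (auto simp: all_after_def class_after_def facs_def)
  have but_T: "class_but m i j \<subseteq> facs k m" "\<forall>A\<in>class_but m i j. fst A = i"
    and after_T: "class_after m i j \<subseteq> facs k m" "\<forall>A\<in>class_after m i j. fst A = i"
    using i by (auto simp: class_but_def class_after_def facs_def)
  have but_R: "{B \<in> facs k m. fst B \<noteq> i} \<subseteq> facs k m" "\<forall>B\<in>{B \<in> facs k m. fst B \<noteq> i}. fst B \<noteq> i"
    and after_R: "{B \<in> facs k m. i < fst B} \<subseteq> facs k m" "\<forall>B\<in>{B \<in> facs k m. i < fst B}. fst B \<noteq> i"
    by auto
  note but = adjust_other_classes[OF orth ij but_T but_R, folded all_but]
  note after = adjust_other_classes[OF orth ij after_T after_R, folded all_after]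
  show ?thesis
    using but after SS_E_eq_SS_tot_minus_class_totals[OF orth] by simp
qed

end
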